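(* Let $0<\alpha\le\delta<\infty$ and let $p\in\mathcal M_1^+$ with $a(p)\in X_{\alpha,\delta}$. Then for all $0\le q\le q'\le1$ one has $a(\mathcal R_q(p))_k\le a(\mathcal R_{q'}(p))_k$ for all $k\in\mathbb N_0$. In particular, $a(\mathcal R_q(p))\in X_{\alpha,\delta}$ for all $0\le q\le1$.
   Context: $\mathcal M_1^+$ is the set of probability measures on $\mathbb N_0$, identified with nonnegative sequences summing to $1$. For $q\in[0,1]$, $$T^{(q)}_{ij,k\ell}=C^{(q)}_{k\ell}\,\delta_{i+j,k+\ell}\,(1+\min\{k,\ell,i,j\})\,q^{\max\{0,\ \min\{k,\ell\}-\min\{i,j\}\}},$$ with $0^0=1$ and $C^{(q)}_{k\ell}>0$ chosen so that $\sum_{i,j\ge0}T^{(q)}_{ij,k\ell}=1$; $\mathcal R_q(p)_i=\sum_{j,k,\ell\ge0}T^{(q)}_{ij,k\ell}p_kp_\ell$. For $p\in\mathcal M_1^+$, $a(p)_k=\frac{1}{k+1}\sum_{\ell\ge k}\binom{\ell}{k}p_\ell\in[0,\infty]$. $X_{\alpha,\delta}$ is the set of real sequences $a$ with $a_0=1$, $a_1=\alpha$, $0\le a_k\le\delta^k$ for $k\ge2$. *)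

theory Defs
  imports "HOL-Analysis.Analysis"
begin

definition M1plus :: "(nat \<Rightarrow> real) set" where
  "M1plus = {p. (\<forall>k. 0 \<le> p k) \<and> p sums 1}"

text \<open>Unnormalised kernel weight (without the constant C). Note 0^0 = 1 in Isabelle,
  and nat subtraction truncates at 0, giving max{0, min{k,l} - min{i,j}}.\<close>
definition Tw :: "real \<Rightarrow> nat \<Rightarrow> nat \<Rightarrow> nat \<Rightarrow> nat \<Rightarrow> real" where
  "Tw q i j k l = (if i + j = k + l then
      (1 + real (min (min k l) (min i j))) * q ^ (min k l - min i j) else 0)"

text \<open>Normalising constant: the sum over all i,j of Tw is a finite sum over i+j=k+l.\<close>
definition C :: "real \<Rightarrow> nat \<Rightarrow> nat \<Rightarrow> real" where
  "C q k l = 1 / (\<Sum>i\<le>k + l. Tw q i (k + l - i) k l)"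

definition T :: "real \<Rightarrow> nat \<Rightarrow> nat \<Rightarrow> nat \<Rightarrow> nat \<Rightarrow> real" where
  "T q i j k l = C q k l * Tw q i j k l"

definition R :: "real \<Rightarrow> (nat \<Rightarrow> real) \<Rightarrow> nat \<Rightarrow> real" where
  "R q p i = (\<Sum>\<^sub>\<infinity>(j, k, l) \<in> UNIV. T q i j k l * p k * p l)"

definition a :: "(nat \<Rightarrow> real) \<Rightarrow> nat \<Rightarrow> ennreal" where
  "a p k = ennreal (1 / (real k + 1)) *
     (\<Sum>l. if k \<le> l then ennreal (real (l choose k) * p l) else 0)"

definition X :: "real \<Rightarrow> real \<Rightarrow> (nat \<Rightarrow> real) set" where
  "X \<alpha> \<delta> = {b. b 0 = 1 \<and> b 1 = \<alpha> \<and> (\<forall>k\<ge>2. 0 \<le> b k \<and> b k \<le> \<delta> ^ k)}"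

definition aInX :: "(nat \<Rightarrow> real) \<Rightarrow> real \<Rightarrow> real \<Rightarrow> bool" where
  "aInX p \<alpha> \<delta> \<longleftrightarrow> (\<forall>k. a p k \<noteq> \<infinity>) \<and> (\<lambda>k. enn2real (a p k)) \<in> X \<alpha> \<delta>"

end

theory Submission
  imports Defs
begin

text \<open>
  An incoming pair \<open>(k, l)\<close> is replaced by \<open>(i, k+l-i)\<close> with probability proportional to
  \<open>Tw q i (k+l-i) k l\<close>, so \<open>a(R\<^sub>q p)\<^sub>r\<close> is the \<open>p \<otimes> p\<close>-average of the expectation of
  \<open>(i choose r) / (r+1)\<close> under this law. The weights are symmetric under \<open>i \<mapsto> k+l-i\<close>, and
  increasing \<open>q\<close> tilts them, in the likelihood-ratio order, towards small \<open>min i (k+l-i)\<close>, where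
  the symmetrised \<open>(i choose r) + (k+l-i choose r)\<close> is largest; by Chebyshev's sum inequality the
  expectation is therefore increasing in \<open>q\<close>. At \<open>q = 1\<close> the weight of \<open>i\<close> is the number of
  splittings \<open>i = x + y\<close> with \<open>x \<le> k\<close>, \<open>y \<le> l\<close>, and Vandermonde's identity gives
  \<open>a(R\<^sub>1 p)\<^sub>r = (\<Sum>s\<le>r. a(p)\<^sub>s a(p)\<^bsub>r-s\<^esub>) / (r+1) \<le> \<delta>\<^sup>r\<close>. The same convolution
  formula holds for every \<open>q\<close> when \<open>r \<le> 1\<close>, so \<open>a(R\<^sub>q p)\<^sub>0 = 1\<close> and \<open>a(R\<^sub>q p)\<^sub>1 = \<alpha>\<close>.
\<close>

section \<open>The kernel on the diagonal i + j = k + l\<close>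

definition Tw_total :: "real \<Rightarrow> nat \<Rightarrow> nat \<Rightarrow> real" where
  "Tw_total q k l = (\<Sum>i\<le>k+l. Tw q i (k+l-i) k l)"

definition binomial_moment :: "real \<Rightarrow> nat \<Rightarrow> nat \<Rightarrow> nat \<Rightarrow> real" where
  "binomial_moment q k l r = (\<Sum>i\<le>k+l. real (i choose r) * T q i (k+l-i) k l)"

lemma Tw_nonneg: "0 \<le> q \<Longrightarrow> 0 \<le> Tw q i j k l"
  by (simp add: Tw_def)

lemma Tw_diagonal:
  "i \<le> k+l \<Longrightarrow> Tw q i (k+l-i) k l
     = (1 + real (min (min k l) (min i (k+l-i)))) * q ^ (min k l - min i (k+l-i))"
  by (simp add: Tw_def)

lemma Tw_reflect: "i \<le> k+l \<Longrightarrow> Tw q (k+l-i) i k l = Tw q i (k+l-i) k l"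
  by (simp add: Tw_def min.commute)

lemma Tw_total_pos:
  assumes "0 \<le> q"
  shows "0 < Tw_total q k l"
proof -
  have "0 < Tw q k (k+l-k) k l" by (simp add: Tw_def)
  also have "\<dots> \<le> Tw_total q k l" unfolding Tw_total_def
    by (rule member_le_sum) (auto intro: Tw_nonneg assms)
  finally show ?thesis .
qed

lemma T_eq_Tw_div: "T q i j k l = Tw q i j k l / Tw_total q k l"
  by (simp add: T_def C_def Tw_total_def)

lemma T_nonneg: "0 \<le> q \<Longrightarrow> 0 \<le> T q i j k l"
  by (simp add: T_eq_Tw_div Tw_nonneg Tw_total_pos less_imp_le)

lemma T_le_1:
  assumes "0 \<le> q"
  shows "T q i j k l \<le> 1"
proof (cases "i + j = k + l")
  case True
  then have j: "j = k+l-i" and i: "i \<le> k+l" by auto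
  have "Tw q i j k l \<le> Tw_total q k l" unfolding Tw_total_def j
    by (rule member_le_sum) (use i in \<open>auto intro: Tw_nonneg assms\<close>)
  then show ?thesis using Tw_total_pos[OF assms] by (simp add: T_eq_Tw_div)
next
  case False
  then show ?thesis by (simp add: T_eq_Tw_div Tw_def)
qed

lemma binomial_moment_eq:
  "binomial_moment q k l r
     = (\<Sum>i\<le>k+l. real (i choose r) * Tw q i (k+l-i) k l) / Tw_total q k l"
  by (simp add: binomial_moment_def T_eq_Tw_div sum_divide_distrib)

lemma sum_Tw_reflect:
  "(\<Sum>i\<le>k+l. f i * Tw q i (k+l-i) k l) = (\<Sum>i\<le>k+l. f (k+l-i) * Tw q i (k+l-i) k l)"
  by (rule sum.reindex_bij_witness[where i = "\<lambda>i. k+l-i" and j = "\<lambda>i. k+l-i"])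
     (auto simp: Tw_reflect)

text \<open>Chebyshev's sum inequality, in likelihood-ratio form.\<close>
lemma sum_weighted_cross_le:
  fixes H w w' :: "'a \<Rightarrow> real" and t :: "'a \<Rightarrow> 'b::linorder"
  assumes H: "\<And>i j. i \<in> A \<Longrightarrow> j \<in> A \<Longrightarrow> t i \<le> t j \<Longrightarrow> H j \<le> H i"
    and w: "\<And>i j. i \<in> A \<Longrightarrow> j \<in> A \<Longrightarrow> t i \<le> t j \<Longrightarrow> w i * w' j \<le> w' i * w j"
  shows "(\<Sum>i\<in>A. H i * w i) * sum w' A \<le> (\<Sum>i\<in>A. H i * w' i) * sum w A"
proof -
  define D where "D i j = (H i - H j) * (w i * w' j - w' i * w j)" for i j
  have D_nonpos: "D i j \<le> 0" if "i \<in> A" "j \<in> A" for i j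
  proof (cases "t i \<le> t j")
    case True
    then show ?thesis using H[of i j] w[of i j] that by (simp add: D_def mult_nonneg_nonpos)
  next
    case False
    then have "H i - H j \<le> 0" "0 \<le> w i * w' j - w' i * w j"
      using H[of j i] w[of j i] that by (auto simp: algebra_simps)
    then show ?thesis unfolding D_def by (rule mult_nonpos_nonneg)
  qed
  define E where "E i j = H i * (w i * w' j - w' i * w j)" for i j
  have "(\<Sum>i\<in>A. \<Sum>j\<in>A. E i j)
      = (\<Sum>i\<in>A. H i * w i) * sum w' A - (\<Sum>i\<in>A. H i * w' i) * sum w A"
    by (simp add: E_def right_diff_distrib sum_subtractf sum_product mult.assoc)
  moreover have "(\<Sum>i\<in>A. \<Sum>j\<in>A. D i j) = (\<Sum>i\<in>A. \<Sum>j\<in>A. E i j) + (\<Sum>i\<in>A. \<Sum>j\<in>A. E j i)"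
    by (simp add: D_def E_def sum.distrib[symmetric] algebra_simps)
  moreover have "(\<Sum>i\<in>A. \<Sum>j\<in>A. E j i) = (\<Sum>i\<in>A. \<Sum>j\<in>A. E i j)"
    by (rule sum.swap)
  moreover have "(\<Sum>i\<in>A. \<Sum>j\<in>A. D i j) \<le> 0"
    by (intro sum_nonpos) (use D_nonpos in auto)
  ultimately show ?thesis by linarith
qed

section \<open>Monotonicity of the binomial moments in q\<close>

lemma choose_reflect_sum_step:
  assumes "2 * Suc t \<le> n"
  shows "(Suc t choose r) + (n - Suc t choose r) \<le> (t choose r) + (n - t choose r)"
proof (cases r)
  case 0
  then show ?thesis by simp
next
  case (Suc s)
  have n: "n - t = Suc (n - Suc t)" using assms by simp
  have "t choose s \<le> n - Suc t choose s"
    by (rule binomial_right_mono) (use assms in simp)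
  then show ?thesis unfolding Suc n by simp
qed

lemma choose_reflect_sum_antimono:
  assumes "t \<le> t'" and "2 * t' \<le> n"
  shows "(t' choose r) + (n - t' choose r) \<le> (t choose r) + (n - t choose r)"
  using assms
proof (induction t' rule: dec_induct)
  case base
  then show ?case by simp
next
  case (step m)
  then show ?case using choose_reflect_sum_step[of m n r] by simp
qed

lemma choose_reflect_sum_le:
  assumes "i \<le> n" and "j \<le> n" and "min i (n-i) \<le> min j (n-j)"
  shows "(j choose r) + (n-j choose r) \<le> (i choose r) + (n-i choose r)"
proof -
  have reflect: "(m choose r) + (n-m choose r) = (min m (n-m) choose r) + (n - min m (n-m) choose r)"
    if "m \<le> n" for m
    using that by (cases "m \<le> n - m") (auto simp: min_def)
  have "2 * min j (n-j) \<le> n" using assms(2) by (auto simp: min_def)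
  then have "(min j (n-j) choose r) + (n - min j (n-j) choose r)
      \<le> (min i (n-i) choose r) + (n - min i (n-i) choose r)"
    by (rule choose_reflect_sum_antimono[OF assms(3)])
  then show ?thesis by (simp only: reflect[OF assms(1)] reflect[OF assms(2)])
qed

lemma power_cross_le:
  fixes q q' :: "'a::linordered_semidom"
  assumes "0 \<le> q" and "q \<le> q'" and "e' \<le> e"
  shows "q ^ e * q' ^ e' \<le> q' ^ e * q ^ e'"
proof -
  obtain d where e: "e = e' + d" using assms(3) le_Suc_ex by blast
  have "(q ^ e' * q' ^ e') * q ^ d \<le> (q ^ e' * q' ^ e') * q' ^ d"
    using assms by (intro mult_left_mono power_mono) auto
  then show ?thesis unfolding e power_add by (simp add: algebra_simps)
qed

lemma Tw_cross_le:
  assumes "0 \<le> q" and "q \<le> q'" and "i \<le> k+l" and "j \<le> k+l"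
    and "min i (k+l-i) \<le> min j (k+l-j)"
  shows "Tw q i (k+l-i) k l * Tw q' j (k+l-j) k l \<le> Tw q' i (k+l-i) k l * Tw q j (k+l-j) k l"
proof -
  define ci where "ci = 1 + real (min (min k l) (min i (k+l-i)))"
  define cj where "cj = 1 + real (min (min k l) (min j (k+l-j)))"
  have "min k l - min j (k+l-j) \<le> min k l - min i (k+l-i)"
    using assms(5) by (rule diff_le_mono2)
  then have "(ci * cj) * (q ^ (min k l - min i (k+l-i)) * q' ^ (min k l - min j (k+l-j)))
      \<le> (ci * cj) * (q' ^ (min k l - min i (k+l-i)) * q ^ (min k l - min j (k+l-j)))"
    by (intro mult_left_mono power_cross_le assms(1,2)) (simp_all add: ci_def cj_def)
  then show ?thesis
    using assms(3,4) by (simp add: Tw_diagonal ci_def[symmetric] cj_def[symmetric] algebra_simps)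
qed

lemma binomial_moment_mono:
  assumes "0 \<le> q" and "q \<le> q'"
  shows "binomial_moment q k l r \<le> binomial_moment q' k l r"
proof -
  define H where "H i = real (i choose r) + real (k+l-i choose r)" for i
  define w where "w q i = Tw q i (k+l-i) k l" for q i
  have moment: "binomial_moment q k l r = (\<Sum>i\<le>k+l. H i * w q i) / (2 * sum (w q) {..k+l})"
    for q
  proof -
    have "(\<Sum>i\<le>k+l. H i * w q i)
        = (\<Sum>i\<le>k+l. real (i choose r) * w q i) + (\<Sum>i\<le>k+l. real (k+l-i choose r) * w q i)"
      by (simp add: H_def sum.distrib[symmetric] algebra_simps)
    also have "\<dots> = 2 * (\<Sum>i\<le>k+l. real (i choose r) * w q i)"
      using sum_Tw_reflect[of "\<lambda>i. real (i choose r)" q k l] by (simp add: w_def)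
    finally show ?thesis
      unfolding binomial_moment_eq Tw_total_def w_def[symmetric] by simp
  qed
  have H: "H j \<le> H i" if "i \<le> k+l" "j \<le> k+l" "min i (k+l-i) \<le> min j (k+l-j)" for i j
    using choose_reflect_sum_le[OF that, of r] unfolding H_def by (metis of_nat_add of_nat_le_iff)
  have "(\<Sum>i\<le>k+l. H i * w q i) * sum (w q') {..k+l} \<le> (\<Sum>i\<le>k+l. H i * w q' i) * sum (w q) {..k+l}"
    by (rule sum_weighted_cross_le[where t = "\<lambda>i. min i (k+l-i)"])
       (auto simp: w_def intro: H Tw_cross_le assms)
  moreover have "0 < sum (w q) {..k+l}" "0 < sum (w q') {..k+l}"
    using Tw_total_pos[of q k l] Tw_total_pos[of q' k l] assms by (simp_all add: Tw_total_def w_def)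
  ultimately show ?thesis
    unfolding moment by (simp add: frac_le_eq field_simps)
qed

section \<open>The case q = 1\<close>

definition binomial_convolution :: "nat \<Rightarrow> nat \<Rightarrow> nat \<Rightarrow> real" where
  "binomial_convolution k l r =
     (\<Sum>s\<le>r. real (k choose s) / real (s+1) * (real (l choose (r-s)) / real (r-s+1)))"

lemma card_splittings:
  assumes "i + j = k + l"
  shows "card {x. x \<le> k \<and> x \<le> i \<and> i \<le> x + l} = 1 + min (min k l) (min i j)"
proof -
  have "{x. x \<le> k \<and> x \<le> i \<and> i \<le> x + l} = {i-l..min k i}" by auto
  then have "card {x. x \<le> k \<and> x \<le> i \<and> i \<le> x + l} = Suc (min k i) - (i - l)" by simp
  also have "\<dots> = 1 + min (min k l) (min i j)" using assms by (auto simp: min_def)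
  finally show ?thesis .
qed

lemma sum_Tw_q1:
  fixes f :: "nat \<Rightarrow> real"
  shows "(\<Sum>i\<le>k+l. f i * Tw 1 i (k+l-i) k l) = (\<Sum>x\<le>k. \<Sum>y\<le>l. f (x+y))"
proof -
  have inner: "(\<Sum>y\<le>l. f (x+y)) = (\<Sum>i\<le>k+l. if x \<le> i \<and> i \<le> x+l then f i else 0)"
    if "x \<le> k" for x
  proof -
    have "(\<Sum>y\<le>l. f (x+y)) = sum f {x..x+l}"
      using sum.shift_bounds_cl_nat_ivl[of f 0 x l] by (simp add: atMost_atLeast0 add.commute)
    also have "{x..x+l} = {i\<in>{..k+l}. x \<le> i \<and> i \<le> x+l}" using that by auto
    also have "sum f \<dots> = (\<Sum>i\<le>k+l. if x \<le> i \<and> i \<le> x+l then f i else 0)"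
      by (rule sum.inter_filter) simp
    finally show ?thesis .
  qed
  have "(\<Sum>x\<le>k. \<Sum>y\<le>l. f (x+y)) = (\<Sum>x\<le>k. \<Sum>i\<le>k+l. if x \<le> i \<and> i \<le> x+l then f i else 0)"
    by (simp add: inner)
  also have "\<dots> = (\<Sum>i\<le>k+l. \<Sum>x\<le>k. if x \<le> i \<and> i \<le> x+l then f i else 0)"
    by (rule sum.swap)
  also have "\<dots> = (\<Sum>i\<le>k+l. f i * Tw 1 i (k+l-i) k l)"
  proof (rule sum.cong)
    fix i assume "i \<in> {..k+l}"
    then show "(\<Sum>x\<le>k. if x \<le> i \<and> i \<le> x+l then f i else 0) = f i * Tw 1 i (k+l-i) k l"
      using card_splittings[of i "k+l-i" k l] by (simp add: sum.inter_filter[symmetric] Tw_diagonal)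
  qed simp
  finally show ?thesis by simp
qed

lemma Tw_total_q1: "Tw_total 1 k l = real (k+1) * real (l+1)"
  using sum_Tw_q1[of "\<lambda>_. 1" k l] by (simp add: Tw_total_def)

lemma sum_choose_upper_div: "(\<Sum>x\<le>k. real (x choose s)) = real (k+1) * (real (k choose s) / real (s+1))"
proof -
  have "real (Suc s) * real (Suc k choose Suc s) = real (Suc k) * real (k choose s)"
    using Suc_times_binomial_eq[of k s] by (metis mult.commute of_nat_mult)
  then show ?thesis by (simp add: of_nat_sum[symmetric] sum_choose_upper field_simps)
qed

lemma binomial_moment_q1: "binomial_moment 1 k l r = binomial_convolution k l r"
proof -
  have "(\<Sum>x\<le>k. \<Sum>y\<le>l. real (x+y choose r))
      = (\<Sum>x\<le>k. \<Sum>y\<le>l. \<Sum>s\<le>r. real (x choose s) * real (y choose (r-s)))"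
    by (simp add: vandermonde[symmetric] of_nat_sum)
  also have "\<dots> = (\<Sum>x\<le>k. \<Sum>s\<le>r. \<Sum>y\<le>l. real (x choose s) * real (y choose (r-s)))"
    by (intro sum.cong refl sum.swap)
  also have "\<dots> = (\<Sum>s\<le>r. (\<Sum>x\<le>k. real (x choose s)) * (\<Sum>y\<le>l. real (y choose (r-s))))"
    by (subst sum.swap) (simp add: sum_product)
  also have "\<dots> = real (k+1) * real (l+1) * binomial_convolution k l r"
    by (simp add: sum_choose_upper_div binomial_convolution_def sum_distrib_left algebra_simps)
  finally show ?thesis
    by (simp add: binomial_moment_eq sum_Tw_q1 Tw_total_q1 del: of_nat_add of_nat_Suc)
qed

lemma binomial_moment_zeroth: "0 \<le> q \<Longrightarrow> binomial_moment q k l 0 = binomial_convolution k l 0"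
  using Tw_total_pos[of q k l] by (simp add: binomial_moment_eq binomial_convolution_def Tw_total_def)

lemma binomial_moment_first:
  assumes "0 \<le> q"
  shows "binomial_moment q k l 1 = binomial_convolution k l 1"
proof -
  define w where "w i = Tw q i (k+l-i) k l" for i
  have "2 * (\<Sum>i\<le>k+l. real i * w i) = (\<Sum>i\<le>k+l. real i * w i) + (\<Sum>i\<le>k+l. real (k+l-i) * w i)"
    using sum_Tw_reflect[of real q k l] by (simp add: w_def)
  also have "\<dots> = (\<Sum>i\<le>k+l. real (k+l) * w i)"
    by (simp add: sum.distrib[symmetric] ring_distribs[symmetric] of_nat_diff del: of_nat_add)
  also have "\<dots> = real (k+l) * Tw_total q k l"
    by (simp add: Tw_total_def w_def sum_distrib_left)
  finally have moment: "(\<Sum>i\<le>k+l. real i * w i) = real (k+l) / 2 * Tw_total q k l"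
    by simp
  have "binomial_moment q k l 1 = (\<Sum>i\<le>k+l. real i * w i) / Tw_total q k l"
    by (simp add: binomial_moment_eq w_def)
  also have "\<dots> = real (k+l) / 2"
    using Tw_total_pos[OF assms, of k l] by (simp add: moment)
  also have "\<dots> = binomial_convolution k l 1"
    by (simp add: binomial_convolution_def)
  finally show ?thesis .
qed

section \<open>From R to the binomial moments\<close>

lemma M1plus_nonneg: "p \<in> M1plus \<Longrightarrow> 0 \<le> p k"
  by (simp add: M1plus_def)

lemma M1plus_has_sum: "p \<in> M1plus \<Longrightarrow> (p has_sum 1) UNIV"
  by (intro sums_nonneg_imp_has_sum) (auto simp: M1plus_def)

lemma M1plus_product_summable:
  assumes "p \<in> M1plus"
  shows "(\<lambda>(k, l). p k * p l) summable_on UNIV"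
proof -
  have "(\<lambda>(k, l). p k * p l) summable_on UNIV \<times> UNIV"
  proof (rule summable_on_SigmaI[where g = p])
    show "((\<lambda>l. case (k, l) of (k, l) \<Rightarrow> p k * p l) has_sum p k) UNIV" for k
      using has_sum_cmult_right[OF M1plus_has_sum[OF assms], of "p k"] by simp
    show "p summable_on UNIV"
      using M1plus_has_sum[OF assms] by (rule has_sum_imp_summable)
  qed (auto simp: M1plus_nonneg[OF assms])
  then show ?thesis by simp
qed

lemma infsum_eq_suminf:
  fixes f :: "nat \<Rightarrow> 'a::{topological_comm_monoid_add, t2_space}"
  shows "f summable_on UNIV \<Longrightarrow> infsum f UNIV = suminf f"
  by (metis has_sum_imp_sums has_sum_infsum sums_unique)

lemma ennreal_infsum_pairs:
  fixes g :: "nat \<times> nat \<Rightarrow> real"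
  assumes g: "g summable_on UNIV" and nonneg: "\<And>x. 0 \<le> g x"
  shows "ennreal (infsum g UNIV) = (\<Sum>k. \<Sum>l. ennreal (g (k, l)))"
proof -
  have g2: "(\<lambda>(k, l). g (k, l)) summable_on UNIV \<times> UNIV" using g by simp
  have inner: "(\<lambda>l. g (k, l)) summable_on UNIV" for k
  proof -
    have "g summable_on range (Pair k)" by (rule summable_on_subset_banach[OF g]) simp
    then show ?thesis by (subst (asm) summable_on_reindex) (auto simp: inj_on_def o_def)
  qed
  have outer: "(\<lambda>k. \<Sum>l. g (k, l)) summable_on UNIV"
    using summable_on_Sigma_banach[OF g2] by (simp add: infsum_eq_suminf[OF inner])
  have inner_nonneg: "0 \<le> (\<Sum>l. g (k, l))" for k
    by (rule suminf_nonneg) (simp_all add: nonneg summable_on_imp_summable[OF inner])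
  have "infsum g UNIV = (\<Sum>k. \<Sum>l. g (k, l))"
    using infsum_Sigma'_banach[OF g2]
    by (simp add: infsum_eq_suminf[OF inner] infsum_eq_suminf[OF outer])
  then have "ennreal (infsum g UNIV) = (\<Sum>k. ennreal (\<Sum>l. g (k, l)))"
    using suminf_ennreal2[OF inner_nonneg summable_on_imp_summable[OF outer]] by simp
  also have "\<dots> = (\<Sum>k. \<Sum>l. ennreal (g (k, l)))"
    using suminf_ennreal2[OF nonneg summable_on_imp_summable[OF inner]] by simp
  finally show ?thesis .
qed

lemma suminf_swap_ennreal: "(\<Sum>i. \<Sum>j. f i j) = (\<Sum>j. \<Sum>i. f i j :: ennreal)"
proof -
  have "(\<integral>\<^sup>+j. \<integral>\<^sup>+i. f i j \<partial>count_space UNIV \<partial>count_space UNIV)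
      = (\<integral>\<^sup>+i. \<integral>\<^sup>+j. f i j \<partial>count_space UNIV \<partial>count_space (UNIV::nat set))"
    by (rule nn_integral_count_space_nn_integral) auto
  then show ?thesis by (simp add: nn_integral_count_space_nat)
qed

lemma R_eq_infsum_pairs: "R q p i = infsum (\<lambda>(k, l). T q i (k+l-i) k l * p k * p l) UNIV"
proof -
  define F where "F = (\<lambda>(j, k, l). T q i j k l * p k * p l)"
  define h where "h = (\<lambda>(k::nat, l::nat). (k+l-i, k, l))"
  have "R q p i = infsum F (range h)"
    unfolding R_def F_def
  proof (rule infsum_cong_neutral)
    fix x assume "x \<in> UNIV - range h"
    moreover obtain j k l where x: "x = (j, k, l)" by (cases x) auto
    ultimately have "x \<noteq> h (k, l)" by blast
    then have "i + j \<noteq> k + l" by (auto simp: x h_def)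
    then show "(case x of (j, k, l) \<Rightarrow> T q i j k l * p k * p l) = 0"
      by (simp add: x T_def Tw_def)
  qed auto
  also have "\<dots> = infsum (F \<circ> h) UNIV"
    by (rule infsum_reindex) (auto simp: inj_on_def h_def)
  also have "F \<circ> h = (\<lambda>(k, l). T q i (k+l-i) k l * p k * p l)"
    by (auto simp: F_def h_def)
  finally show ?thesis .
qed

lemma ennreal_R:
  assumes p: "p \<in> M1plus" and q: "0 \<le> q"
  shows "ennreal (R q p i) = (\<Sum>k. \<Sum>l. ennreal (T q i (k+l-i) k l * p k * p l))"
proof -
  define g where "g = (\<lambda>(k, l). T q i (k+l-i) k l * p k * p l)"
  have nonneg: "0 \<le> g x" for x
    by (cases x) (auto simp: g_def T_nonneg q M1plus_nonneg[OF p])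
  have "g (k, l) \<le> p k * p l" for k l
    using T_le_1[OF q] mult_right_mono[of _ 1 "p k * p l"]
    by (simp add: g_def mult.assoc M1plus_nonneg[OF p])
  then have "g summable_on UNIV"
    by (intro summable_on_comparison_test[OF M1plus_product_summable[OF p]]) (auto simp: nonneg)
  from ennreal_infsum_pairs[OF this nonneg] show ?thesis
    by (simp add: R_eq_infsum_pairs g_def)
qed

lemma a_R:
  assumes p: "p \<in> M1plus" and q: "0 \<le> q"
  shows "a (R q p) r
    = ennreal (1 / (real r + 1)) * (\<Sum>k. \<Sum>l. ennreal (p k * p l * binomial_moment q k l r))"
proof -
  define t where "t i k l = ennreal (real (i choose r) * (T q i (k+l-i) k l * p k * p l))" for i k l
  have R_nonneg: "0 \<le> R q p i" for i
    unfolding R_def by (rule infsum_nonneg) (auto simp: T_nonneg q M1plus_nonneg[OF p])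
  have term_i: "(if r \<le> i then ennreal (real (i choose r) * R q p i) else 0) = (\<Sum>k. \<Sum>l. t i k l)" for i
  proof -
    have "(if r \<le> i then ennreal (real (i choose r) * R q p i) else 0)
        = ennreal (real (i choose r)) * ennreal (R q p i)"
      by (auto simp: ennreal_mult' R_nonneg)
    then show ?thesis
      by (simp add: ennreal_R[OF p q] t_def ennreal_mult')
  qed
  have sum_i: "(\<Sum>i. t i k l) = ennreal (p k * p l * binomial_moment q k l r)" for k l
  proof -
    have "(\<Sum>i. t i k l) = (\<Sum>i\<le>k+l. t i k l)"
      by (rule suminf_finite) (auto simp: t_def T_eq_Tw_div Tw_def)
    also have "\<dots> = ennreal (\<Sum>i\<le>k+l. real (i choose r) * (T q i (k+l-i) k l * p k * p l))"
      unfolding t_def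
      by (rule sum_ennreal) (auto intro!: mult_nonneg_nonneg T_nonneg q M1plus_nonneg[OF p])
    also have "(\<Sum>i\<le>k+l. real (i choose r) * (T q i (k+l-i) k l * p k * p l))
        = p k * p l * binomial_moment q k l r"
      by (simp add: binomial_moment_def sum_distrib_left algebra_simps)
    finally show ?thesis .
  qed
  have "a (R q p) r = ennreal (1 / (real r + 1)) * (\<Sum>i. \<Sum>k. \<Sum>l. t i k l)"
    unfolding a_def by (simp add: term_i)
  also have "(\<Sum>i. \<Sum>k. \<Sum>l. t i k l) = (\<Sum>k. \<Sum>l. \<Sum>i. t i k l)"
    by (simp add: suminf_swap_ennreal[of "\<lambda>i k. \<Sum>l. t i k l"] suminf_swap_ennreal[of "\<lambda>i l. t i _ l"])
  finally show ?thesis by (simp add: sum_i)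
qed

section \<open>The moments of R q p\<close>

lemma a_R_mono:
  assumes p: "p \<in> M1plus" and "0 \<le> q" and "q \<le> q'"
  shows "a (R q p) r \<le> a (R q' p) r"
proof -
  have "(\<Sum>k. \<Sum>l. ennreal (p k * p l * binomial_moment q k l r))
      \<le> (\<Sum>k. \<Sum>l. ennreal (p k * p l * binomial_moment q' k l r))"
    using assms
    by (intro suminf_le summableI ennreal_leI mult_left_mono binomial_moment_mono)
       (auto simp: M1plus_nonneg[OF p])
  then show ?thesis
    using assms by (simp add: a_R mult_left_mono)
qed

lemma a_eq_suminf:
  assumes "\<And>l. 0 \<le> p l"
  shows "a p s = (\<Sum>l. ennreal (p l * (real (l choose s) / real (s+1))))"
  unfolding a_def ennreal_suminf_cmult[symmetric]
  by (rule suminf_cong) (auto simp: ennreal_mult'[symmetric] assms field_simps)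

lemma a_R_eq_convolution:
  assumes p: "p \<in> M1plus" and q: "0 \<le> q"
    and moment: "\<And>k l. binomial_moment q k l r = binomial_convolution k l r"
  shows "a (R q p) r = ennreal (1 / (real r + 1)) * (\<Sum>s\<le>r. a p s * a p (r-s))"
proof -
  define c where "c s k = p k * (real (k choose s) / real (s+1))" for s k
  have c_nonneg: "0 \<le> c s k" for s k
    by (simp add: c_def M1plus_nonneg[OF p])
  have split: "ennreal (p k * p l * binomial_moment q k l r)
      = (\<Sum>s\<le>r. ennreal (c s k) * ennreal (c (r-s) l))" for k l
  proof -
    have "p k * p l * binomial_moment q k l r = (\<Sum>s\<le>r. c s k * c (r-s) l)"
      by (simp add: c_def moment binomial_convolution_def sum_distrib_left algebra_simps)
    then show ?thesis
      by (simp add: sum_ennreal[symmetric] ennreal_mult' c_nonneg)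
  qed
  have "(\<Sum>k. \<Sum>l. ennreal (p k * p l * binomial_moment q k l r))
      = (\<Sum>k. \<Sum>l. \<Sum>s\<le>r. ennreal (c s k) * ennreal (c (r-s) l))"
    by (simp add: split)
  also have "\<dots> = (\<Sum>s\<le>r. \<Sum>k. \<Sum>l. ennreal (c s k) * ennreal (c (r-s) l))"
    by (subst suminf_sum, simp, subst suminf_sum) auto
  also have "\<dots> = (\<Sum>s\<le>r. a p s * a p (r-s))"
    by (simp add: a_eq_suminf[OF M1plus_nonneg[OF p]] c_def)
  finally show ?thesis by (simp add: a_R[OF p q])
qed

lemma a_mass:
  assumes "p \<in> M1plus"
  shows "a p 0 = 1"
proof -
  have "a p 0 = (\<Sum>l. ennreal (p l))"
    by (simp add: a_eq_suminf M1plus_nonneg[OF assms])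
  also have "\<dots> = ennreal 1"
    using assms unfolding M1plus_def by (intro suminf_ennreal_eq) auto
  finally show ?thesis by simp
qed

lemma a_R_mass: "p \<in> M1plus \<Longrightarrow> 0 \<le> q \<Longrightarrow> a (R q p) 0 = 1"
  by (simp add: a_R_eq_convolution binomial_moment_zeroth a_mass)

lemma a_R_mean:
  assumes "p \<in> M1plus" and "0 \<le> q"
  shows "a (R q p) 1 = a p 1"
proof -
  have "a (R q p) 1 = ennreal (1 / (real 1 + 1)) * (\<Sum>s\<le>1. a p s * a p (1-s))"
    by (rule a_R_eq_convolution[OF assms binomial_moment_first[OF assms(2)]])
  also have "\<dots> = ennreal (1 / 2) * (ennreal 2 * a p 1)"
    by (simp add: a_mass[OF assms(1)] mult_2 del: ennreal_half)
  also have "\<dots> = ennreal (1 / 2 * 2) * a p 1"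
    by (simp only: mult.assoc[symmetric] ennreal_mult'[symmetric])
  finally show ?thesis by simp
qed

lemma a_R_q1_le_pow:
  assumes p: "p \<in> M1plus" and "0 \<le> \<delta>" and le: "\<And>s. a p s \<le> ennreal (\<delta> ^ s)"
  shows "a (R 1 p) r \<le> ennreal (\<delta> ^ r)"
proof -
  have "(\<Sum>s\<le>r. a p s * a p (r-s)) \<le> (\<Sum>s\<le>r. ennreal (\<delta> ^ s) * ennreal (\<delta> ^ (r-s)))"
    by (intro sum_mono mult_mono le) auto
  also have "\<dots> = (\<Sum>s\<le>r. ennreal (\<delta> ^ r))"
    using \<open>0 \<le> \<delta>\<close> by (intro sum.cong) (simp_all add: ennreal_mult'[symmetric] power_add[symmetric])
  also have "\<dots> = ennreal (\<Sum>s\<le>r. \<delta> ^ r)"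
    using \<open>0 \<le> \<delta>\<close> by (intro sum_ennreal) simp
  also have "(\<Sum>s\<le>r. \<delta> ^ r) = (real r + 1) * \<delta> ^ r"
    by simp
  finally have "a (R 1 p) r \<le> ennreal (1 / (real r + 1)) * ennreal ((real r + 1) * \<delta> ^ r)"
    unfolding a_R_eq_convolution[OF p zero_le_one binomial_moment_q1] by (rule mult_left_mono) simp
  also have "\<dots> = ennreal (\<delta> ^ r)"
    by (simp add: ennreal_mult'[symmetric])
  finally show ?thesis .
qed

lemma aInX_le_pow:
  assumes "aInX p \<alpha> \<delta>" and "\<alpha> \<le> \<delta>"
  shows "a p s \<le> ennreal (\<delta> ^ s)"
proof -
  have "s \<ge> 2 \<or> s = 0 \<or> s = 1" by auto
  then have "enn2real (a p s) \<le> \<delta> ^ s"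
    using assms by (auto simp: aInX_def X_def)
  then have "ennreal (enn2real (a p s)) \<le> ennreal (\<delta> ^ s)" by (rule ennreal_leI)
  then show ?thesis using assms(1) by (simp add: aInX_def top.not_eq_extremum)
qed

lemma aInX_if_le_pow:
  assumes "aInX p \<alpha> \<delta>" and "0 \<le> \<delta>"
    and "a p' 0 = 1" and "a p' 1 = a p 1" and le: "\<And>k. a p' k \<le> ennreal (\<delta> ^ k)"
  shows "aInX p' \<alpha> \<delta>"
proof -
  have finite: "a p' k \<noteq> \<infinity>" for k
    using le[of k] by (auto simp: top_unique)
  have "enn2real (a p' k) \<le> \<delta> ^ k" for k
    using enn2real_mono[OF le[of k]] \<open>0 \<le> \<delta>\<close> by simp
  with assms(1,3,4) finite show ?thesis
    by (auto simp: aInX_def X_def simp del: One_nat_def)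
qed

theorem proposition16:
  fixes \<alpha> \<delta> :: real and p :: "nat \<Rightarrow> real"
  assumes "0 < \<alpha>" and "\<alpha> \<le> \<delta>" and "p \<in> M1plus" and "aInX p \<alpha> \<delta>"
  shows "(\<forall>q q' k. 0 \<le> q \<longrightarrow> q \<le> q' \<longrightarrow> q' \<le> 1 \<longrightarrow> a (R q p) k \<le> a (R q' p) k)
         \<and> (\<forall>q. 0 \<le> q \<longrightarrow> q \<le> 1 \<longrightarrow> aInX (R q p) \<alpha> \<delta>)"
proof (intro conjI allI impI)
  fix q q' :: real and k :: nat
  assume "0 \<le> q" and "q \<le> q'"
  then show "a (R q p) k \<le> a (R q' p) k" by (rule a_R_mono[OF assms(3)])
next
  fix q :: real
  assume q: "0 \<le> q" "q \<le> 1"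
  have \<delta>: "0 \<le> \<delta>" using assms(1,2) by linarith
  have "a (R q p) k \<le> ennreal (\<delta> ^ k)" for k
    using a_R_mono[OF assms(3) q] a_R_q1_le_pow[OF assms(3) \<delta> aInX_le_pow[OF assms(4,2)]]
    by (rule order_trans)
  with assms(4) \<delta> a_R_mass[OF assms(3) q(1)] a_R_mean[OF assms(3) q(1)]
  show "aInX (R q p) \<alpha> \<delta>" by (rule aInX_if_le_pow)
qed

end
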